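(* Consider a single-relay network with no direct source–destination link. Let $q$ be a prime power, $K\ge1$, $N_{\mathrm S}\ge K$, $N_{\mathrm R}\ge 1$. A source S draws $N_{\mathrm S}$ coefficient vectors i.i.d. uniformly from $\mathbb{F}_q^K$ and sends one packet per vector to a relay R, each packet erased independently with probability $\epsilon_{\mathrm{SR}}$ (independently of the coefficients); the destination D receives nothing from S. R, having received $m_1$ packets with coefficient matrix $\mathbf{C}_{\mathrm S\to\mathrm R}\in\mathbb{F}_q^{m_1\times K}$, draws $\mathbf{G}\in\mathbb{F}_q^{N_{\mathrm R}\times m_1}$ with i.i.d. uniform entries and transmits the $N_{\mathrm R}$ rows of $\mathbf{G}\mathbf{C}_{\mathrm S\to\mathrm R}$ to D, each erased independently with probability $\epsilon_{\mathrm{RD}}$. Decoding succeeds iff the received recoded coefficient vectors span a space of rank $K$. Then the probability of successful decoding equals $$P^{(1)}_{\mathrm R}=P(N_{\mathrm S},\epsilon_{\mathrm{SR}})\,P(N_{\mathrm R},\epsilon_{\mathrm{RD}}),\qquad\text{where } P(N,\epsilon)=\sum_{k=K}^{N}\binom{N}{k}(1-\epsilon)^k\epsilon^{N-k}\prod_{i=0}^{K-1}\left(1-q^{i-k}\right),$$ with $P(N,\epsilon):=0$ if $N<K$.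
   Context: $P(N,\epsilon)$ is the probability that, of $N$ packets carrying i.i.d. uniform coefficient vectors in $\mathbb{F}_q^K$ each independently erased with probability $\epsilon$, the received ones have rank $K$. *)

theory Defs
  imports "HOL-Analysis.Analysis" "HOL-Probability.Probability"
begin

definition P_link :: "nat \<Rightarrow> nat \<Rightarrow> nat \<Rightarrow> real \<Rightarrow> real" where
  "P_link q K N eps =
     (\<Sum>k=K..N. real (N choose k) * (1 - eps) ^ k * eps ^ (N - k) *
        (\<Prod>i<K. 1 - real q powi (int i - int k)))"

definition lincomb :: "'a::field list \<Rightarrow> ('a ^ 'n) list \<Rightarrow> 'a ^ 'n" where
  "lincomb g cs = sum_list (map2 (\<lambda>a c. a *s c) g cs)"

definition relay_experiment ::
  "nat \<Rightarrow> nat \<Rightarrow> real \<Rightarrow> real \<Rightarrow> ('a::{finite,field} ^ 'n::finite) list pmf" where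
  "relay_experiment NS NR eSR eRD = do {
     S \<leftarrow> replicate_pmf NS (pair_pmf (pmf_of_set (UNIV :: ('a ^ 'n) set)) (bernoulli_pmf eSR));
     let C = map fst (filter (\<lambda>(v, e). \<not> e) S);
     G \<leftarrow> replicate_pmf NR (pair_pmf (replicate_pmf (length C) (pmf_of_set (UNIV :: 'a set)))
                                       (bernoulli_pmf eRD));
     return_pmf (map (\<lambda>g. lincomb g C) (map fst (filter (\<lambda>(g, e). \<not> e) G)))
   }"

end

theory Submission
  imports Defs
begin

text \<open>
  Given the relay's received coefficient matrix \<open>C\<close>, the rows of \<open>G C\<close> are i.i.d. and distributed
  as the image of the uniform distribution under the linear map \<open>g \<mapsto> g C\<close>.  If the rows of \<open>C\<close>
  span \<open>\<bbbF>\<^sub>q\<^sup>K\<close>, this map is surjective, so by translation invariance the image is again uniform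
  and the relay-destination link behaves exactly like a direct link; otherwise everything D
  receives lies in the proper subspace spanned by \<open>C\<close>.  Hence the success probability is the
  product of the two single-link probabilities.  On a single link the number of surviving
  packets is binomial, and \<open>k\<close> uniform vectors complete a subspace of codimension \<open>c\<close> to the
  whole space with probability \<open>\<Prod>j<c. 1 - q\<^sup>j / q\<^sup>k\<close>: conditioning on the first vector, it
  falls into the current span with probability \<open>q\<^sup>-\<^sup>c\<close>.
\<close>

lemma (in vector_space) card_span_independent:
  assumes "finite (UNIV :: 'a set)" and "finite B" and "independent B"
  shows "card (span B) = CARD('a) ^ card B"
  using assms(2,3)
proof (induction B rule: finite_induct)
  case empty
  then show ?case by simp
next
  case (insert b B)
  have b_notin: "b \<notin> span B" and indep: "independent B"
    using insert.prems insert.hyps by (simp_all add: independent_insert)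
  let ?f = "\<lambda>(a, y). scale a b + y"
  have image: "span (insert b B) = ?f ` (UNIV \<times> span B)"
  proof safe
    fix x assume "x \<in> span (insert b B)"
    then obtain k where "x - scale k b \<in> span B" by (auto simp: span_breakdown_eq)
    then show "x \<in> ?f ` (UNIV \<times> span B)"
      by (intro image_eqI[of _ _ "(k, x - scale k b)"]) auto
  next
    fix a y assume "y \<in> span B"
    then show "scale a b + y \<in> span (insert b B)"
      by (meson insertI1 span_add span_base span_mono span_scale subset_insertI subsetD)
  qed
  have "inj_on ?f (UNIV \<times> span B)"
  proof (rule inj_onI, clarify)
    fix a y a' y'
    assume y: "y \<in> span B" "y' \<in> span B" and eq: "scale a b + y = scale a' b + y'"
    have "scale (a - a') b = y' - y"
      using eq by (simp add: scale_left_diff_distrib algebra_simps)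
    then have "scale (a - a') b \<in> span B"
      using span_diff[OF y(2,1)] by simp
    then have "a = a'"
      using b_notin by (metis left_inverse right_minus_eq scale_one scale_scale span_scale)
    with eq show "a = a' \<and> y = y'" by simp
  qed
  then have "card (span (insert b B)) = CARD('a) * card (span B)"
    by (simp add: image card_image card_cartesian_product)
  with insert.IH[OF indep] insert.hyps show ?case by simp
qed

lemma (in finite_dimensional_vector_space) card_span:
  assumes "finite (UNIV :: 'a set)"
  shows "card (span S) = CARD('a) ^ dim S"
proof -
  obtain B where "B \<subseteq> span S" "independent B" "span S \<subseteq> span B" "card B = dim S"
    using basis_exists[of "span S"] by (auto simp: dim_span)
  moreover from this have "span B = span S"
    by (metis span_mono span_span subset_antisym)
  ultimately show ?thesis
    using card_span_independent[OF assms] finiteI_independent by metis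
qed

lemma dim_eq_CARD_iff_span_UNIV:
  "vec.dim (S :: ('a::field ^ 'n::finite) set) = CARD('n) \<longleftrightarrow> vec.span S = UNIV"
  by (metis vec.dim_eq_full vec_dim_card vec.dim_UNIV vec.dimension_def)

lemma lincomb_Nil [simp]: "lincomb [] C = 0" "lincomb g [] = 0"
  unfolding lincomb_def by simp_all

lemma lincomb_Cons [simp]: "lincomb (a # g) (c # C) = a *s c + lincomb g C"
  unfolding lincomb_def by simp

lemma lincomb_in_span: "lincomb g C \<in> vec.span (set C)"
proof (induction C arbitrary: g)
  case (Cons c C)
  show ?case
  proof (cases g)
    case (Cons a g')
    have "lincomb g' C \<in> vec.span (set (c # C))"
      using Cons.IH vec.span_mono[of "set C" "set (c # C)"] by auto
    moreover have "a *s c \<in> vec.span (set (c # C))"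
      by (simp add: vec.span_base vec.span_scale)
    ultimately show ?thesis
      by (simp add: Cons vec.span_add)
  qed (simp add: vec.span_zero)
qed (simp add: vec.span_zero)

lemma span_set_eq_lincombs:
  "vec.span (set C) = {lincomb g C | g. length g = length C}"
proof (induction C)
  case Nil
  then show ?case by simp
next
  case (Cons c C)
  have "\<exists>g. x = lincomb g (c # C) \<and> length g = length (c # C)"
    if x_in: "x \<in> vec.span (set (c # C))" for x
  proof -
    obtain k where "x - k *s c \<in> vec.span (set C)"
      using x_in by (auto simp: vec.span_breakdown_eq)
    with Cons.IH obtain g where "x - k *s c = lincomb g C" "length g = length C"
      by auto
    then show ?thesis
      by (intro exI[of _ "k # g"]) (simp add: diff_eq_eq add.commute)
  qed
  then show ?case
    using lincomb_in_span by blast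
qed

lemma lincomb_map2_add:
  "length h = length g \<Longrightarrow> lincomb (map2 (+) h g) C = lincomb h C + lincomb g C"
proof (induction C arbitrary: h g)
  case (Cons c C)
  then show ?case
    by (cases h; cases g) (simp_all add: vector_sadd_rdistrib algebra_simps)
qed simp

lemma prob_bind_pmf:
  "measure_pmf.prob (bind_pmf M f) A = measure_pmf.expectation M (\<lambda>x. measure_pmf.prob (f x) A)"
  unfolding measure_pmf_bind
  by (rule measure_pmf.measure_bind[where N="count_space UNIV"])
     (auto simp: space_subprob_algebra measure_pmf_in_subprob_algebra
           intro: prob_space_imp_subprob_space measure_pmf.prob_space_axioms)

lemma expectation_if_mem:
  fixes a b :: real
  shows "measure_pmf.expectation M (\<lambda>x. if x \<in> A then a else b)
           = a * measure_pmf.prob M A + b * (1 - measure_pmf.prob M A)"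
proof -
  have "measure_pmf.expectation M (\<lambda>x. if x \<in> A then a else b)
          = measure_pmf.expectation M (\<lambda>x. b + (a - b) * indicator A x)"
    by (intro Bochner_Integration.integral_cong) (auto simp: indicator_def)
  also have "\<dots> = b + (a - b) * measure_pmf.prob M A"
  proof -
    have "integrable M (indicator A :: _ \<Rightarrow> real)"
      by (rule measure_pmf.integrable_const_bound[where B=1]) auto
    then show ?thesis by simp
  qed
  finally show ?thesis by (simp add: algebra_simps)
qed

lemma replicate_pmf_Suc_map:
  "replicate_pmf (Suc k) p = bind_pmf p (\<lambda>v. map_pmf (Cons v) (replicate_pmf k p))"
  by (simp add: map_pmf_def)

lemma map_replicate_pmf: "map_pmf (map f) (replicate_pmf n p) = replicate_pmf n (map_pmf f p)"
proof (induction n)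
  case (Suc n)
  have "map_pmf (map f) (replicate_pmf (Suc n) p)
          = bind_pmf p (\<lambda>x. map_pmf (Cons (f x)) (map_pmf (map f) (replicate_pmf n p)))"
    unfolding replicate_pmf_Suc_map map_bind_pmf pmf.map_comp o_def by simp
  then show ?case
    unfolding Suc.IH replicate_pmf_Suc_map bind_map_pmf .
qed simp

lemma map_pmf_add_uniform:
  "map_pmf ((+) a) (pmf_of_set UNIV) = pmf_of_set (UNIV :: 'a::{finite,group_add} set)"
proof -
  have "inj ((+) a)" and "surj ((+) a)"
    by (auto simp: inj_def intro!: surjI[of _ "\<lambda>y. - a + y"] simp flip: add.assoc)
  then show ?thesis by (simp add: map_pmf_of_set_inj)
qed

lemma map_pmf_map2_add_uniform:
  fixes h :: "'a::{finite,group_add} list"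
  assumes "length h = m"
  shows "map_pmf (map2 (+) h) (replicate_pmf m (pmf_of_set UNIV)) = replicate_pmf m (pmf_of_set UNIV)"
  using assms
proof (induction m arbitrary: h)
  case (Suc m)
  then obtain a h' where h: "h = a # h'" "length h' = m"
    by (metis length_Suc_conv)
  have "map_pmf (map2 (+) h) (replicate_pmf (Suc m) (pmf_of_set UNIV))
          = bind_pmf (pmf_of_set UNIV) (\<lambda>x. map_pmf (Cons (a + x))
              (map_pmf (map2 (+) h') (replicate_pmf m (pmf_of_set UNIV))))"
    unfolding replicate_pmf_Suc_map map_bind_pmf pmf.map_comp o_def h by simp
  also have "\<dots> = bind_pmf (map_pmf ((+) a) (pmf_of_set UNIV))
                    (\<lambda>y. map_pmf (Cons y) (replicate_pmf m (pmf_of_set UNIV)))"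
    unfolding Suc.IH[OF h(2)] bind_map_pmf ..
  finally show ?case
    unfolding map_pmf_add_uniform replicate_pmf_Suc_map .
qed simp

lemma translation_invariant_pmf_eq_uniform:
  fixes D :: "'a::{finite,group_add} pmf"
  assumes invariant: "\<And>a. map_pmf ((+) a) D = D"
  shows "D = pmf_of_set UNIV"
proof -
  have const: "pmf D a = pmf D 0" for a
    using pmf_map_inj'[of "(+) a" D 0] by (simp add: invariant inj_def)
  have "1 = (\<Sum>a\<in>UNIV. pmf D a)"
    by (simp add: sum_pmf_eq_1)
  also have "\<dots> = (\<Sum>a\<in>(UNIV :: 'a set). pmf D 0)"
    by (intro sum.cong refl const)
  finally have "pmf D 0 = 1 / real CARD('a)"
    by (simp add: field_simps)
  then show ?thesis
    by (intro pmf_eqI) (subst const, simp)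
qed

lemma map_pmf_lincomb_uniform:
  fixes C :: "('a::{finite,field} ^ 'n::finite) list"
  assumes "vec.span (set C) = UNIV"
  shows "map_pmf (\<lambda>g. lincomb g C) (replicate_pmf (length C) (pmf_of_set UNIV)) = pmf_of_set UNIV"
proof (rule translation_invariant_pmf_eq_uniform)
  let ?G = "replicate_pmf (length C) (pmf_of_set UNIV)"
  fix x
  have "x \<in> vec.span (set C)"
    using assms by simp
  then obtain h where h: "length h = length C" "lincomb h C = x"
    by (auto simp: span_set_eq_lincombs)
  have "map_pmf ((+) x) (map_pmf (\<lambda>g. lincomb g C) ?G)
          = map_pmf (\<lambda>g. lincomb g C) (map_pmf (map2 (+) h) ?G)"
    unfolding pmf.map_comp o_def
    by (intro map_pmf_cong refl) (simp add: set_replicate_pmf h lincomb_map2_add)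
  then show "map_pmf ((+) x) (map_pmf (\<lambda>g. lincomb g C) ?G) = map_pmf (\<lambda>g. lincomb g C) ?G"
    by (simp add: map_pmf_map2_add_uniform h(1))
qed

definition spanning_prob :: "real \<Rightarrow> nat \<Rightarrow> nat \<Rightarrow> real" where
  "spanning_prob q k c = (\<Prod>j<c. 1 - q ^ j / q ^ k)"

lemma spanning_prob_0_right [simp]: "spanning_prob q k 0 = 1"
  by (simp add: spanning_prob_def)

lemma spanning_prob_eq_0: "k < c \<Longrightarrow> q \<noteq> 0 \<Longrightarrow> spanning_prob q k c = 0"
  unfolding spanning_prob_def by (rule prod_zero) (auto intro!: bexI[of _ k])

lemma spanning_prob_Suc_Suc:
  assumes "q > 0"
  shows "spanning_prob q (Suc k) (Suc c)
           = spanning_prob q k (Suc c) / q ^ Suc c + (1 - 1 / q ^ Suc c) * spanning_prob q k c"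
proof -
  have "spanning_prob q (Suc k) (Suc c) = (1 - 1 / q ^ Suc k) * spanning_prob q k c"
    unfolding spanning_prob_def prod.lessThan_Suc_shift using assms by (simp add: field_simps)
  moreover have "spanning_prob q k (Suc c) = (1 - q ^ c / q ^ k) * spanning_prob q k c"
    unfolding spanning_prob_def by simp
  moreover have "(1 - q ^ c / q ^ k) / q ^ Suc c + (1 - 1 / q ^ Suc c) = 1 - 1 / q ^ Suc k"
    using assms by (simp add: field_simps)
  ultimately show ?thesis
    by (metis (no_types, lifting) distrib_right times_divide_eq_left mult.commute)
qed

lemma prob_uniform_in_span:
  fixes S :: "('a::{finite,field} ^ 'n::finite) set"
  shows "measure_pmf.prob (pmf_of_set UNIV) (vec.span S)
           = 1 / real CARD('a) ^ (CARD('n) - vec.dim S)"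
proof -
  have "vec.dim S \<le> CARD('n)"
    by (rule dim_subset_UNIV_cart_gen)
  then have "real CARD('a) ^ CARD('n)
              = real CARD('a) ^ vec.dim S * real CARD('a) ^ (CARD('n) - vec.dim S)"
    by (simp flip: power_add)
  then show ?thesis
    by (simp add: measure_pmf_of_set vec.card_span)
qed

lemma prob_full_rank_replicate_uniform:
  fixes S :: "('a::{finite,field} ^ 'n::finite) set"
  shows "measure_pmf.prob (replicate_pmf k (pmf_of_set UNIV))
           {vs. vec.dim (S \<union> set vs) = CARD('n)}
         = spanning_prob CARD('a) k (CARD('n) - vec.dim S)"
proof (induction k arbitrary: S)
  case 0
  have "vec.dim S \<le> CARD('n)"
    by (rule dim_subset_UNIV_cart_gen)
  then show ?case
    by (cases "CARD('n) - vec.dim S") (auto simp: spanning_prob_eq_0)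
next
  case (Suc k)
  let ?q = "real CARD('a)" and ?c = "CARD('n) - vec.dim S"
  let ?p = "measure_pmf.prob (pmf_of_set UNIV) (vec.span S)"
  have "measure_pmf.prob (replicate_pmf (Suc k) (pmf_of_set UNIV))
          {vs. vec.dim (S \<union> set vs) = CARD('n)}
          = measure_pmf.expectation (pmf_of_set UNIV)
              (\<lambda>x. spanning_prob ?q k (CARD('n) - vec.dim (insert x S)))"
    using Suc.IH by (simp add: replicate_pmf_Suc_map prob_bind_pmf vimage_def
                          del: replicate_pmf.simps flip: Un_insert_left)
  also have "\<dots> = measure_pmf.expectation (pmf_of_set UNIV)
                    (\<lambda>x. if x \<in> vec.span S then spanning_prob ?q k ?c
                         else spanning_prob ?q k (?c - 1))"
    by (intro Bochner_Integration.integral_cong) (auto simp: vec.dim_insert)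
  also have "\<dots> = spanning_prob ?q k ?c * ?p + spanning_prob ?q k (?c - 1) * (1 - ?p)"
    by (rule expectation_if_mem)
  also have "\<dots> = spanning_prob ?q (Suc k) ?c"
    by (cases ?c) (simp_all add: prob_uniform_in_span spanning_prob_Suc_Suc)
  finally show ?case .
qed

definition erasure_link :: "nat \<Rightarrow> 'a pmf \<Rightarrow> real \<Rightarrow> ('a \<times> bool) list pmf" where
  "erasure_link N p e = replicate_pmf N (pair_pmf p (bernoulli_pmf e))"

definition received :: "('a \<times> bool) list \<Rightarrow> 'a list" where
  "received S = map fst (filter (\<lambda>(v, e). \<not> e) S)"

lemma received_Nil [simp]: "received [] = []"
  by (simp add: received_def)

lemma received_Cons [simp]: "received ((v, e) # S) = (if e then received S else v # received S)"
  by (simp add: received_def)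

lemma received_map: "received (map (\<lambda>(x, e). (f x, e)) S) = map f (received S)"
  by (induction S) auto

lemma map_pmf_erasure_link:
  "map_pmf (map (\<lambda>(x, e). (f x, e))) (erasure_link N p e) = erasure_link N (map_pmf f p) e"
  unfolding erasure_link_def map_replicate_pmf map_pair[of f id, simplified] ..

lemma map_pmf_Not_bernoulli_pmf:
  assumes "0 \<le> e" "e \<le> 1"
  shows "map_pmf Not (bernoulli_pmf e) = bernoulli_pmf (1 - e)"
proof (rule pmf_eqI)
  fix b
  have "pmf (map_pmf Not (bernoulli_pmf e)) (\<not> \<not> b) = pmf (bernoulli_pmf e) (\<not> b)"
    by (rule pmf_map_inj') (simp add: inj_def)
  then show "pmf (map_pmf Not (bernoulli_pmf e)) b = pmf (bernoulli_pmf (1 - e)) b"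
    using assms by (cases b) simp_all
qed

lemma map_pmf_received_erasure_link:
  assumes "0 \<le> e" "e \<le> 1"
  shows "map_pmf received (erasure_link N p e)
           = bind_pmf (binomial_pmf N (1 - e)) (\<lambda>k. replicate_pmf k p)"
proof (induction N)
  case 0
  then show ?case
    using assms by (simp add: erasure_link_def binomial_pmf_0 bind_return_pmf)
next
  case (Suc N)
  let ?K = "binomial_pmf N (1 - e)" and ?R = "\<lambda>k. replicate_pmf k p"
  have keep_or_drop: "bind_pmf p (\<lambda>v. map_pmf (\<lambda>xs. if b then xs else v # xs) (bind_pmf ?K ?R))
                        = bind_pmf ?K (\<lambda>k. ?R ((if \<not> b then 1 else 0) + k))" for b
  proof (cases b)
    case False
    have "bind_pmf p (\<lambda>v. map_pmf (Cons v) (bind_pmf ?K ?R))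
            = bind_pmf ?K (\<lambda>k. bind_pmf p (\<lambda>v. map_pmf (Cons v) (?R k)))"
      unfolding map_bind_pmf by (rule bind_commute_pmf)
    with False show ?thesis
      by (simp add: replicate_pmf_Suc_map del: replicate_pmf.simps)
  qed (simp add: bind_pmf_const)
  have "map_pmf received (erasure_link (Suc N) p e)
          = bind_pmf p (\<lambda>v. bind_pmf (bernoulli_pmf e) (\<lambda>b.
              map_pmf (\<lambda>xs. if b then xs else v # xs) (map_pmf received (erasure_link N p e))))"
    by (simp add: erasure_link_def replicate_pmf_Suc_map pair_pmf_def map_bind_pmf bind_assoc_pmf
        bind_return_pmf pmf.map_comp o_def del: replicate_pmf.simps)
  also have "\<dots> = bind_pmf (bernoulli_pmf e)
                    (\<lambda>b. bind_pmf ?K (\<lambda>k. ?R ((if \<not> b then 1 else 0) + k)))"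
    unfolding Suc.IH keep_or_drop[symmetric] by (rule bind_commute_pmf)
  also have "\<dots> = bind_pmf (bernoulli_pmf (1 - e))
                    (\<lambda>c. bind_pmf ?K (\<lambda>k. ?R ((if c then 1 else 0) + k)))"
    using assms by (simp flip: map_pmf_Not_bernoulli_pmf add: bind_map_pmf)
  also have "\<dots> = bind_pmf (binomial_pmf (Suc N) (1 - e)) ?R"
    using assms by (simp add: binomial_pmf_Suc bind_assoc_pmf bind_return_pmf)
  finally show ?case .
qed

lemma P_link_eq_sum_spanning_prob:
  assumes "q > 0"
  shows "P_link q K N e
           = (\<Sum>k\<le>N. real (N choose k) * (1 - e) ^ k * e ^ (N - k) * spanning_prob (real q) k K)"
proof -
  let ?t = "\<lambda>k. real (N choose k) * (1 - e) ^ k * e ^ (N - k) * spanning_prob (real q) k K"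
  have "(\<Prod>i<K. 1 - real q powi (int i - int k)) = spanning_prob (real q) k K" for k
    unfolding spanning_prob_def using assms by (intro prod.cong refl) (simp add: power_int_diff)
  then have "P_link q K N e = (\<Sum>k=K..N. ?t k)"
    by (simp add: P_link_def)
  also have "\<dots> = (\<Sum>k\<le>N. ?t k)"
    by (rule sum.mono_neutral_left) (use assms in \<open>auto simp: spanning_prob_eq_0\<close>)
  finally show ?thesis .
qed

lemma prob_full_rank_erasure_link:
  assumes "0 \<le> e" "e \<le> 1"
  shows "measure_pmf.prob (erasure_link N (pmf_of_set (UNIV :: ('a::{finite,field} ^ 'n::finite) set)) e)
           {S. vec.dim (set (received S)) = CARD('n)}
         = P_link CARD('a) CARD('n) N e"
proof -
  let ?U = "pmf_of_set (UNIV :: ('a ^ 'n) set)" and ?K = "binomial_pmf N (1 - e)"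
  have "measure_pmf.prob (erasure_link N ?U e) {S. vec.dim (set (received S)) = CARD('n)}
          = measure_pmf.prob (map_pmf received (erasure_link N ?U e))
              {vs. vec.dim (set vs) = CARD('n)}"
    by (simp add: vimage_def)
  also have "\<dots> = measure_pmf.expectation ?K (\<lambda>k. spanning_prob CARD('a) k CARD('n))"
    using prob_full_rank_replicate_uniform[where S = "{}" and 'a = 'a and 'n = 'n]
    by (simp add: map_pmf_received_erasure_link assms prob_bind_pmf)
  also have "\<dots> = (\<Sum>k\<le>N. spanning_prob CARD('a) k CARD('n) * pmf ?K k)"
    by (rule integral_measure_pmf_real)
       (use assms in \<open>auto simp: set_pmf_binomial_eq split: if_splits\<close>)
  also have "\<dots> = P_link CARD('a) CARD('n) N e"
    using assms by (simp add: P_link_eq_sum_spanning_prob algebra_simps)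
  finally show ?thesis .
qed

definition recoding_link ::
  "nat \<Rightarrow> real \<Rightarrow> ('a::{finite,field} ^ 'n::finite) list \<Rightarrow> ('a ^ 'n) list pmf" where
  "recoding_link N e C =
     map_pmf (\<lambda>G. map (\<lambda>g. lincomb g C) (received G))
       (erasure_link N (replicate_pmf (length C) (pmf_of_set UNIV)) e)"

lemma relay_experiment_eq_bind:
  "relay_experiment NS NR eSR eRD =
     bind_pmf (erasure_link NS (pmf_of_set UNIV) eSR) (\<lambda>S. recoding_link NR eRD (received S))"
  unfolding relay_experiment_def recoding_link_def erasure_link_def received_def Let_def map_pmf_def ..

lemma recoding_link_spanning:
  assumes "vec.span (set C) = UNIV"
  shows "recoding_link N e C = map_pmf received (erasure_link N (pmf_of_set UNIV) e)"
proof -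
  have "recoding_link N e C = map_pmf received (map_pmf (map (\<lambda>(g, b). (lincomb g C, b)))
          (erasure_link N (replicate_pmf (length C) (pmf_of_set UNIV)) e))"
    unfolding recoding_link_def pmf.map_comp o_def received_map ..
  then show ?thesis
    by (simp add: map_pmf_erasure_link map_pmf_lincomb_uniform[OF assms])
qed

lemma prob_full_rank_recoding_link:
  fixes C :: "('a::{finite,field} ^ 'n::finite) list"
  assumes "0 \<le> e" "e \<le> 1"
  shows "measure_pmf.prob (recoding_link N e C) {out. vec.dim (set out) = CARD('n)}
           = (if vec.dim (set C) = CARD('n) then P_link CARD('a) CARD('n) N e else 0)"
proof (cases "vec.dim (set C) = CARD('n)")
  case True
  then have "vec.span (set C) = UNIV"
    by (simp add: dim_eq_CARD_iff_span_UNIV)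
  then show ?thesis
    using True prob_full_rank_erasure_link[OF assms, of N]
    by (simp add: recoding_link_spanning vimage_def)
next
  case False
  then have "vec.dim (set C) < CARD('n)"
    using dim_subset_UNIV_cart_gen le_neq_implies_less by blast
  moreover have "vec.dim (set (map (\<lambda>g. lincomb g C) gs)) \<le> vec.dim (set C)" for gs
    by (rule vec.dim_mono) (auto intro: lincomb_in_span)
  ultimately have "vec.dim (set (map (\<lambda>g. lincomb g C) gs)) \<noteq> CARD('n)" for gs
    by (metis le_less_trans less_irrefl)
  then have "(\<lambda>G. map (\<lambda>g. lincomb g C) (received G)) -` {out. vec.dim (set out) = CARD('n)}
              = {}"
    by blast
  then show ?thesis
    using False by (simp add: recoding_link_def)
qed

theorem mainTheorem5:
  fixes q K NS NR :: nat and eSR eRD :: real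
  assumes "q = CARD('a::{finite,field})"
      and "K = CARD('n::finite)"
      and "NS \<ge> K" and "NR \<ge> 1"
      and "0 \<le> eSR" and "eSR \<le> 1" and "0 \<le> eRD" and "eRD \<le> 1"
  shows "measure_pmf.prob (relay_experiment NS NR eSR eRD :: ('a ^ 'n) list pmf)
            {out. vec.dim (set out) = K}
         = P_link q K NS eSR * P_link q K NR eRD"
proof -
  let ?S = "erasure_link NS (pmf_of_set (UNIV :: ('a ^ 'n) set)) eSR"
  let ?full = "{S. vec.dim (set (received S)) = CARD('n)}"
  have "measure_pmf.prob (relay_experiment NS NR eSR eRD :: ('a ^ 'n) list pmf)
          {out. vec.dim (set out) = CARD('n)}
      = measure_pmf.expectation ?S (\<lambda>S. measure_pmf.prob (recoding_link NR eRD (received S))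
          {out. vec.dim (set out) = CARD('n)})"
    by (simp add: relay_experiment_eq_bind prob_bind_pmf)
  also have "\<dots> = measure_pmf.expectation ?S
                    (\<lambda>S. P_link CARD('a) CARD('n) NR eRD * indicator ?full S)"
    using assms(7,8)
    by (intro Bochner_Integration.integral_cong refl) (simp add: prob_full_rank_recoding_link)
  also have "\<dots> = P_link CARD('a) CARD('n) NR eRD * measure_pmf.prob ?S ?full"
    by simp
  also have "measure_pmf.prob ?S ?full = P_link CARD('a) CARD('n) NS eSR"
    using assms(5,6) by (rule prob_full_rank_erasure_link)
  finally show ?thesis
    using assms(1,2) by simp
qed

end
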